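(* Let $f \in \mathbb{Z}[x]$ be a polynomial with $f(\mathbb{N}) \subseteq \mathbb{N}$. Then the following two conditions are equivalent: (i) For every prime number $p$, the reduction map $f_p : \mathbb{Z}/p\mathbb{Z} \to \mathbb{Z}/p\mathbb{Z}$, $x \bmod p \mapsto f(x) \bmod p$, is not a cyclic permutation of length $p$ (i.e. it is not a permutation of $\mathbb{Z}/p\mathbb{Z}$ consisting of a single cycle of length $p$). (ii) For any $a, b \in \mathbb{N}$, if $f{\uparrow}_a{\uparrow}_b(n) \to \infty$ in $\mathbb{R}$ as $n \to \infty$, then for every prime number $p$ the limit $\lim_{n \to \infty} f{\uparrow}_a{\uparrow}_b(n)$ exists in the ring $\mathbb{Z}_p$ of $p$-adic integers, and this limit is independent of $b$.
   Context: $\mathbb{N} = \{1,2,3,\dots\}$ denotes the set of positive integers. For a map $g : X \to X$ and $x \in X$, $g^n$ denotes the $n$-th iterate of $g$ and $g{\uparrow}_x : \mathbb{N} \to X$ is the map $n \mapsto g^n(x)$. For $f$ as in the statement and $a \in \mathbb{N}$, $f{\uparrow}_a : \mathbb{N} \to \mathbb{N}$, $n \mapsto f^n(a)$, and $f{\uparrow}_a{\uparrow}_b = (f{\uparrow}_a){\uparrow}_b$, i.e. $f{\uparrow}_a{\uparrow}_b(n) = (f{\uparrow}_a)^n(b)$; equivalently, this is the sequence $y_n$ with $y_0 = b$ and $y_{n+1} = f^{y_n}(a)$. Positive integers are regarded as elements of $\mathbb{Z}_p$ via the natural embedding. *)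

theory Defs
  imports Complex_Main "HOL-Computational_Algebra.Polynomial" "HOL-Number_Theory.Number_Theory"
begin

text \<open>The map f restricted to positive integers (meaningful when f(N) \<subseteq> N).\<close>
definition fN :: "int poly \<Rightarrow> nat \<Rightarrow> nat" where
  "fN f n = nat (poly f (int n))"

definition up1 :: "int poly \<Rightarrow> nat \<Rightarrow> nat \<Rightarrow> nat" where
  "up1 f a n = (fN f ^^ n) a"

text \<open>f up-arrow a up-arrow b : n \<mapsto> (f up-arrow a)^n(b),
  i.e. y 0 = b, y (n+1) = f^(y n)(a).\<close>
definition up2 :: "int poly \<Rightarrow> nat \<Rightarrow> nat \<Rightarrow> nat \<Rightarrow> nat" where
  "up2 f a b n = (up1 f a ^^ n) b"

definition red_map :: "int poly \<Rightarrow> nat \<Rightarrow> int \<Rightarrow> int" where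
  "red_map f p x = poly f x mod int p"

definition is_full_cycle :: "('a \<Rightarrow> 'a) \<Rightarrow> 'a set \<Rightarrow> bool" where
  "is_full_cycle g S \<longleftrightarrow> bij_betw g S S \<and> (\<forall>x\<in>S. {(g ^^ n) x | n. True} = S)"

text \<open>p-adic integers, represented as compatible systems of residues
  (x k is the residue mod p^k, in {0..<p^k}).\<close>
definition padic_ints :: "nat \<Rightarrow> (nat \<Rightarrow> int) set" where
  "padic_ints p = {x. \<forall>k. 0 \<le> x k \<and> x k < int p ^ k \<and> x (Suc k) mod int p ^ k = x k}"

definition padic_tendsto :: "nat \<Rightarrow> (nat \<Rightarrow> int) \<Rightarrow> (nat \<Rightarrow> int) \<Rightarrow> bool" where
  "padic_tendsto p y x \<longleftrightarrow> x \<in> padic_ints p \<and>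
     (\<forall>k. \<exists>N. \<forall>n\<ge>N. [y n = x k] (mod int p ^ k))"

end

theory Submission
  imports Defs
begin

(* Put u m = f^m(a).  Modulo any M the residue of u m determines that of u (m + 1).  By pigeonhole,
   either u mod M is eventually periodic with a period l < M, or u 0, ..., u (M - 1) are distinct
   mod M and u M = u 0 mod M; in the latter case f permutes the residues modulo every prime factor
   of M in a single cycle.  Under (i), strong induction on M thus shows that every tower
   y (n + 1) = u (y n) tending to infinity is eventually constant mod M, with a constant that only
   depends on a and M; M = p^k yields the common p-adic limit.
   Conversely, if f is a full cycle mod p, then u m = u m' mod p iff m = m' mod p, and f x > x
   for large x, so all towers over a large base a tend to infinity.  A residue rho that is the
   limit mod p of all of them is fixed by m \<mapsto> u m mod p, and by injectivity the tower started
   at rho + 1 never reaches rho mod p. *)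

section \<open>Full cycles\<close>

lemma bij_betw_funpow_cancel:
  assumes "bij_betw g S S" "x \<in> S" "i \<le> j" "(g ^^ i) x = (g ^^ j) x"
  shows "(g ^^ (j - i)) x = x"
proof -
  have "(g ^^ i) ((g ^^ (j - i)) x) = (g ^^ (i + (j - i))) x"
    by (simp add: funpow_add)
  then have "(g ^^ i) ((g ^^ (j - i)) x) = (g ^^ i) x"
    using assms(3,4) by simp
  moreover have "inj_on (g ^^ i) S" "(g ^^ (j - i)) x \<in> S"
    using bij_betw_funpow[OF assms(1)] assms(2) by (auto simp: bij_betw_def)
  ultimately show ?thesis
    using assms(2) by (auto dest: inj_onD)
qed

lemma funpow_orbit_eq_image_period:
  assumes "(g ^^ P) x = x" "0 < P"
  shows "{(g ^^ n) x | n. True} = (\<lambda>n. (g ^^ n) x) ` {..<P}"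
proof -
  have "(g ^^ n) x \<in> (\<lambda>n. (g ^^ n) x) ` {..<P}" for n
    using funpow_mod_eq[OF assms(1), of n] assms(2) by (metis imageI lessThan_iff mod_less_divisor)
  then show ?thesis by auto
qed

lemma is_full_cycle_card_le_period:
  assumes "is_full_cycle g S" "x \<in> S" "(g ^^ d) x = x" "0 < d"
  shows "card S \<le> d"
proof -
  have "S = (\<lambda>n. (g ^^ n) x) ` {..<d}"
    using assms funpow_orbit_eq_image_period by (fastforce simp: is_full_cycle_def)
  then show ?thesis
    using card_image_le[of "{..<d}" "\<lambda>n. (g ^^ n) x"] by simp
qed

lemma is_full_cycle_funpow_card:
  assumes fc: "is_full_cycle g S" and "finite S" "x \<in> S"
  shows "(g ^^ card S) x = x"
proof -
  have bij: "bij_betw g S S" and "\<And>n. (g ^^ n) x \<in> S"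
    using fc \<open>x \<in> S\<close> by (auto simp: is_full_cycle_def)
  then have "card ((\<lambda>n. (g ^^ n) x) ` {..card S}) \<le> card S"
    using \<open>finite S\<close> by (intro card_mono) auto
  then have "\<not> inj_on (\<lambda>n. (g ^^ n) x) {..card S}"
    using card_image by fastforce
  then obtain i j where ij: "i < j" "j \<le> card S" "(g ^^ i) x = (g ^^ j) x"
    unfolding inj_on_def by (metis atMost_iff linorder_neqE_nat)
  then have "card S \<le> j - i"
    using bij_betw_funpow_cancel[OF bij \<open>x \<in> S\<close>] is_full_cycle_card_le_period[OF fc \<open>x \<in> S\<close>]
    by simp
  then have "i = 0" "j = card S"
    using ij by linarith+
  then show ?thesis
    using ij by simp
qed

lemma is_full_cycle_funpow_eq_iff:
  assumes fc: "is_full_cycle g S" and "finite S" "x \<in> S"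
  shows "(g ^^ i) x = (g ^^ j) x \<longleftrightarrow> [i = j] (mod card S)"
proof -
  have bij: "bij_betw g S S"
    using fc by (simp add: is_full_cycle_def)
  have reduce: "(g ^^ k) x = (g ^^ (k mod card S)) x" for k
    using funpow_mod_eq[OF is_full_cycle_funpow_card[OF assms]] by simp
  have below_card: "i' = j'"
    if "i' \<le> j'" "j' < card S" "(g ^^ i') x = (g ^^ j') x" for i' j'
    using bij_betw_funpow_cancel[OF bij \<open>x \<in> S\<close> that(1,3)]
      is_full_cycle_card_le_period[OF fc \<open>x \<in> S\<close>, of "j' - i'"] that(1,2)
    by (cases "i' = j'") auto
  have "card S > 0"
    using assms(2,3) card_gt_0_iff by blast
  show ?thesis
  proof
    assume "(g ^^ i) x = (g ^^ j) x"
    then have "(g ^^ (i mod card S)) x = (g ^^ (j mod card S)) x"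
      using reduce[of i] reduce[of j] by simp
    then show "[i = j] (mod card S)"
      unfolding cong_def using below_card \<open>card S > 0\<close> by (metis mod_less_divisor nat_le_linear)
  next
    assume "[i = j] (mod card S)"
    then show "(g ^^ i) x = (g ^^ j) x"
      using reduce[of i] reduce[of j] by (simp add: cong_def)
  qed
qed

lemma is_full_cycleI_periodic:
  assumes period: "(g ^^ P) x = x" "0 < P" and orbit: "{(g ^^ n) x | n. True} = S"
  shows "is_full_cycle g S"
proof -
  have shift: "(g ^^ (n + k * P)) x = (g ^^ n) x" for n k
    by (metis funpow_mod_eq[OF period(1)] mod_mult_self1)
  have "finite S"
    using funpow_orbit_eq_image_period[OF period] orbit by (metis finite_imageI finite_lessThan)
  have "S \<subseteq> g ` S"
  proof
    fix z assume "z \<in> S"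
    then obtain n where "z = (g ^^ Suc (n + P - 1)) x"
      using orbit shift[of _ 1] period(2) by auto
    then show "z \<in> g ` S"
      using orbit by auto
  qed
  moreover have "g ` S \<subseteq> S"
  proof -
    have "g ((g ^^ n) x) = (g ^^ Suc n) x" for n
      by simp
    then show ?thesis
      using orbit by blast
  qed
  ultimately have "bij_betw g S S"
    using \<open>finite S\<close> finite_surj_inj[of S g] by (simp add: bij_betw_def)
  moreover have "{(g ^^ n) y | n. True} = S" if "y \<in> S" for y
  proof -
    obtain m where m: "y = (g ^^ m) x"
      using orbit \<open>y \<in> S\<close> by auto
    have "(g ^^ n) x = (g ^^ (n + m * P - m)) y" for n
    proof -
      have "m \<le> n + m * P"
        using period(2) by (simp add: trans_le_add2)
      have "(g ^^ (n + m * P - m)) y = (g ^^ (n + m * P - m + m)) x"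
        using m by (simp add: funpow_add)
      then show ?thesis
        using shift[of n m] \<open>m \<le> n + m * P\<close> by simp
    qed
    moreover have "(g ^^ k) y = (g ^^ (k + m)) x" for k
      using m by (simp add: funpow_add)
    ultimately show ?thesis
      using orbit by blast
  qed
  ultimately show ?thesis
    by (simp add: is_full_cycle_def)
qed

section \<open>Iterating maps that preserve congruences\<close>

locale cong_preserving =
  fixes F :: "int \<Rightarrow> int"
  assumes cong: "[x = y] (mod m) \<Longrightarrow> [F x = F y] (mod m)"
begin

lemma funpow_cong: "[x = y] (mod m) \<Longrightarrow> [(F ^^ n) x = (F ^^ n) y] (mod m)"
  by (induction n) (simp_all add: cong)

lemma funpow_mod: "((\<lambda>z. F z mod m) ^^ n) (x mod m) = (F ^^ n) x mod m"
proof (induction n)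
  case (Suc n)
  have "[F ((F ^^ n) x mod m) = F ((F ^^ n) x)] (mod m)"
    by (intro cong) (simp add: cong_def)
  then show ?case
    using Suc by (simp add: cong_def)
qed simp

lemma funpow_cong_periodic:
  assumes period: "[(F ^^ (i + l)) x = (F ^^ i) x] (mod M)"
    and "i \<le> m" "i \<le> m'" "[m = m'] (mod l)"
  shows "[(F ^^ m) x = (F ^^ m') x] (mod M)"
proof -
  have multiple: "[(F ^^ (i + k * l)) x = (F ^^ i) x] (mod M)" for k
  proof (induction k)
    case (Suc k)
    have "(F ^^ (i + Suc k * l)) x = (F ^^ (l + (i + k * l))) x"
      by (simp add: ac_simps)
    also have "\<dots> = (F ^^ l) ((F ^^ (i + k * l)) x)"
      by (simp add: funpow_add)
    also have "[\<dots> = (F ^^ l) ((F ^^ i) x)] (mod M)"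
      using Suc.IH by (rule funpow_cong)
    also have "(F ^^ l) ((F ^^ i) x) = (F ^^ (i + l)) x"
      by (simp add: funpow_add add.commute[of i l])
    also have "[\<dots> = (F ^^ i) x] (mod M)"
      by (rule period)
    finally show ?case .
  qed simp
  have shift: "[(F ^^ (n + k * l)) x = (F ^^ n) x] (mod M)" if "i \<le> n" for n k
  proof -
    have "[(F ^^ (n - i)) ((F ^^ (i + k * l)) x) = (F ^^ (n - i)) ((F ^^ i) x)] (mod M)"
      using multiple by (rule funpow_cong)
    moreover have "(F ^^ (n - i)) ((F ^^ j) x) = (F ^^ (n - i + j)) x" for j
      by (simp add: funpow_add)
    ultimately show ?thesis
      using that by (simp add: ac_simps)
  qed
  show ?thesis
  proof (cases "m \<le> m'")
    case True
    then obtain k where "m' = k * l + m"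
      using \<open>[m = m'] (mod l)\<close> by (metis cong_le_nat cong_sym)
    then show ?thesis
      using shift[OF \<open>i \<le> m\<close>, of k] by (simp add: ac_simps cong_sym)
  next
    case False
    then obtain k where "m = k * l + m'"
      using \<open>[m = m'] (mod l)\<close> by (metis cong_le_nat nat_le_linear)
    then show ?thesis
      using shift[OF \<open>i \<le> m'\<close>, of k] by (simp add: ac_simps)
  qed
qed

lemma funpow_mod_period_cases:
  fixes M :: nat
  assumes "0 < M"
  obtains (shorter) i l where "0 < l" "l < M" "[(F ^^ (i + l)) x = (F ^^ i) x] (mod int M)"
  | (full) "[(F ^^ M) x = x] (mod int M)" "inj_on (\<lambda>m. (F ^^ m) x mod int M) {..<M}"
proof -
  let ?r = "\<lambda>m. (F ^^ m) x mod int M"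
  have shorter_if: thesis if "i < j" "j - i < M" "?r i = ?r j" for i j
    using shorter[of "j - i" i] that by (simp add: cong_def)
  have "?r ` {..M} \<subseteq> {0..<int M}"
    using assms by auto
  then have "card (?r ` {..M}) \<le> M"
    using card_mono[of "{0..<int M}"] by fastforce
  then have "\<not> inj_on ?r {..M}"
    using card_image by fastforce
  then obtain i j where ij: "i < j" "j \<le> M" "?r i = ?r j"
    unfolding inj_on_def by (metis atMost_iff linorder_neqE_nat)
  show thesis
  proof (cases "j - i < M")
    case True
    then show thesis
      using ij shorter_if by blast
  next
    case False
    then have "i = 0" "j = M"
      using ij by linarith+
    show thesis
    proof (cases "inj_on ?r {..<M}")
      case True
      then show thesis
        using full ij(3) \<open>i = 0\<close> \<open>j = M\<close> by (simp add: cong_def)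
    next
      case False
      then obtain i' j' where "i' < j'" "j' < M" "?r i' = ?r j'"
        unfolding inj_on_def by (metis lessThan_iff linorder_neqE_nat)
      then show thesis
        using shorter_if by (meson diff_le_self le_less_trans)
    qed
  qed
qed

lemma is_full_cycle_mod_dvd:
  fixes M q :: nat
  assumes "0 < M" "[(F ^^ M) x = x] (mod int M)" "inj_on (\<lambda>m. (F ^^ m) x mod int M) {..<M}"
    and "q dvd M" "0 < q"
  shows "is_full_cycle (\<lambda>z. F z mod int q) {0..<int q}"
proof (rule is_full_cycleI_periodic)
  let ?g = "\<lambda>z. F z mod int q"
  have "int q dvd int M"
    using \<open>q dvd M\<close> by simp
  then show "(?g ^^ M) (x mod int q) = x mod int q"
    using assms(2) by (simp add: funpow_mod cong_def[symmetric] cong_dvd_modulus)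
  show "0 < M" by fact
  have cover: "(\<lambda>m. (F ^^ m) x mod int M) ` {..<M} = {0..<int M}"
    using assms(1,3) by (intro card_subset_eq) (auto simp: card_image)
  show "{(?g ^^ n) (x mod int q) | n. True} = {0..<int q}"
  proof (intro equalityI subsetI)
    fix z assume "z \<in> {(?g ^^ n) (x mod int q) | n. True}"
    then show "z \<in> {0..<int q}"
      using \<open>0 < q\<close> by (auto simp: funpow_mod)
  next
    fix z assume z: "z \<in> {0..<int q}"
    moreover have "q \<le> M"
      using assms(1,4) by (simp add: dvd_imp_le)
    ultimately have "z \<in> {0..<int M}"
      by auto
    then obtain m where "z = (F ^^ m) x mod int M"
      unfolding cover[symmetric] by blast
    then have "(?g ^^ m) (x mod int q) = z mod int q"
      using \<open>int q dvd int M\<close> by (simp add: funpow_mod mod_mod_cancel)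
    also have "\<dots> = z"
      using z by simp
    finally have "(?g ^^ m) (x mod int q) = z" .
    then show "z \<in> {(?g ^^ n) (x mod int q) | n. True}"
      by blast
  qed
qed

text \<open>The towers \<open>f\<up>\<^sub>a\<up>\<^sub>b\<close> of the paper (with \<open>x = a\<close> and \<open>b = y 0\<close>)
  that tend to infinity.\<close>

definition escaping_tower :: "int \<Rightarrow> (nat \<Rightarrow> nat) \<Rightarrow> bool" where
  "escaping_tower x y \<longleftrightarrow>
     filterlim (\<lambda>n. real (y n)) at_top sequentially \<and> (\<forall>n. int (y (Suc n)) = (F ^^ y n) x)"

lemma eventually_cong_const_if_period:
  fixes M l :: nat
  assumes period: "[(F ^^ (i + l)) x = (F ^^ i) x] (mod int M)" and "0 < l"
    and r: "\<And>y. escaping_tower x y \<Longrightarrow> \<forall>\<^sub>F n in sequentially. [int (y n) = r] (mod int l)"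
  shows "\<exists>r'. \<forall>y. escaping_tower x y \<longrightarrow>
           (\<forall>\<^sub>F n in sequentially. [int (y n) = r'] (mod int M))"
proof (intro exI allI impI)
  define s where "s = i + nat ((r - int i) mod int l)"
  have "i \<le> s"
    by (simp add: s_def)
  have "[int s = r] (mod int l)"
    using \<open>0 < l\<close> by (simp add: s_def cong_def mod_add_right_eq)
  fix y
  assume y: "escaping_tower x y"
  have "\<forall>\<^sub>F n in sequentially. i \<le> y n"
    using y[unfolded escaping_tower_def filterlim_at_top] by (auto dest: spec[of _ "real i"])
  moreover have "\<forall>\<^sub>F n in sequentially. [int (y n) = r] (mod int l)"
    using r[OF y] .
  ultimately have "\<forall>\<^sub>F n in sequentially. [int (y (Suc n)) = (F ^^ s) x] (mod int M)"
  proof eventually_elim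
    case (elim n)
    have "[int (y n) = int s] (mod int l)"
      using elim(2) \<open>[int s = r] (mod int l)\<close> by (simp add: cong_def)
    then have "[y n = s] (mod l)"
      by (simp add: cong_int_iff)
    then show ?case
      using funpow_cong_periodic[OF period] elim(1) \<open>i \<le> s\<close> y by (simp add: escaping_tower_def)
  qed
  then show "\<forall>\<^sub>F n in sequentially. [int (y n) = (F ^^ s) x] (mod int M)"
    using eventually_sequentially_Suc[of "\<lambda>n. [int (y n) = (F ^^ s) x] (mod int M)"] by blast
qed

lemma eventually_cong_const:
  fixes M :: nat
  assumes no_cycle: "\<And>q. prime q \<Longrightarrow> \<not> is_full_cycle (\<lambda>z. F z mod int q) {0..<int q}"
    and "0 < M"
  shows "\<exists>r. \<forall>y. escaping_tower x y \<longrightarrow> (\<forall>\<^sub>F n in sequentially. [int (y n) = r] (mod int M))"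
  using \<open>0 < M\<close>
proof (induction M rule: less_induct)
  case (less M)
  from less.prems show ?case
  proof (cases rule: funpow_mod_period_cases[where x = x])
    case (shorter i l)
    then show ?thesis
      using less.IH[OF shorter(2,1)] eventually_cong_const_if_period by blast
  next
    case full
    show ?thesis
    proof (cases "M = 1")
      case True
      then show ?thesis
        by simp
    next
      case False
      then obtain q where "prime q" "q dvd M"
        using prime_factor_nat by blast
      then show ?thesis
        using is_full_cycle_mod_dvd[OF less.prems full] no_cycle prime_gt_0_nat by blast
    qed
  qed
qed

lemma funpow_cong_iff_is_full_cycle:
  fixes p :: nat
  assumes "is_full_cycle (\<lambda>z. F z mod int p) {0..<int p}" "0 < p"
  shows "[(F ^^ i) x = (F ^^ j) x] (mod int p) \<longleftrightarrow> [i = j] (mod p)"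
  using is_full_cycle_funpow_eq_iff[OF assms(1), of "x mod int p" i j] assms(2)
  by (simp add: funpow_mod cong_def)

lemma tower_avoids_residue:
  fixes p \<rho> :: nat and Y :: "nat \<Rightarrow> nat"
  assumes full: "is_full_cycle (\<lambda>z. F z mod int p) {0..<int p}" and "0 < p"
    and Y_Suc: "\<And>n. int (Y (Suc n)) = (F ^^ Y n) x"
    and fixed: "[(F ^^ \<rho>) x = int \<rho>] (mod int p)" and start: "\<not> [Y 0 = \<rho>] (mod p)"
  shows "\<not> [Y n = \<rho>] (mod p)"
proof (induction n)
  case (Suc n)
  have "[Y (Suc n) = \<rho>] (mod p) \<longleftrightarrow> [int (Y (Suc n)) = int \<rho>] (mod int p)"
    by (rule cong_int_iff[symmetric])
  also have "\<dots> \<longleftrightarrow> [(F ^^ Y n) x = (F ^^ \<rho>) x] (mod int p)"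
    using fixed by (simp add: Y_Suc cong_def)
  also have "\<dots> \<longleftrightarrow> [Y n = \<rho>] (mod p)"
    by (rule funpow_cong_iff_is_full_cycle[OF full \<open>0 < p\<close>])
  finally show ?case
    using Suc.IH by simp
qed (rule start)

lemma not_eventually_cong_const:
  fixes p :: nat and Y :: "nat \<Rightarrow> nat \<Rightarrow> nat"
  assumes full: "is_full_cycle (\<lambda>z. F z mod int p) {0..<int p}" and "2 \<le> p"
    and Y_0: "\<And>b. Y b 0 = b" and Y_Suc: "\<And>b n. int (Y b (Suc n)) = (F ^^ Y b n) x"
  shows "\<exists>b\<ge>1. \<not> (\<forall>\<^sub>F n in sequentially. [int (Y b n) = r] (mod int p))"
proof (rule ccontr)
  assume "\<not> ?thesis"
  have "0 < p"
    using \<open>2 \<le> p\<close> by simp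
  define \<rho> where "\<rho> = nat (r mod int p)"
  have "[int (Y b n) = r] (mod int p) \<longleftrightarrow> [int (Y b n) = int \<rho>] (mod int p)" for b n
    using \<open>0 < p\<close> by (simp add: \<rho>_def cong_def)
  then have "[int (Y b n) = r] (mod int p) \<longleftrightarrow> [Y b n = \<rho>] (mod p)" for b n
    by (simp add: cong_int_iff)
  with \<open>\<not> ?thesis\<close> have ev: "\<And>b. 1 \<le> b \<Longrightarrow> \<forall>\<^sub>F n in sequentially. [Y b n = \<rho>] (mod p)"
    by simp
  obtain N where "\<forall>n\<ge>N. [Y 1 n = \<rho>] (mod p)"
    using ev[of 1] by (auto simp: eventually_sequentially)
  then have N: "[Y 1 N = \<rho>] (mod p)" "[Y 1 (Suc N) = \<rho>] (mod p)"
    by simp_all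
  have "[(F ^^ Y 1 N) x = (F ^^ \<rho>) x] (mod int p)"
    using funpow_cong_iff_is_full_cycle[OF full \<open>0 < p\<close>] N(1) by simp
  moreover have "[(F ^^ Y 1 N) x = int \<rho>] (mod int p)"
    using N(2) Y_Suc[of 1 N] by (simp flip: cong_int_iff)
  ultimately have fixed: "[(F ^^ \<rho>) x = int \<rho>] (mod int p)"
    by (rule cong_trans[OF cong_sym])
  have "\<not> [Y (\<rho> + 1) 0 = \<rho>] (mod p)"
  proof
    assume "[Y (\<rho> + 1) 0 = \<rho>] (mod p)"
    then have "[1 + int \<rho> = int \<rho>] (mod int p)"
      by (simp add: Y_0 flip: cong_int_iff)
    then show False
      using \<open>2 \<le> p\<close> by (auto simp: cong_iff_dvd_diff)
  qed
  then have "\<not> [Y (\<rho> + 1) n = \<rho>] (mod p)" for n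
    using tower_avoids_residue[OF full \<open>0 < p\<close>, where Y = "Y (\<rho> + 1)", OF Y_Suc fixed] by blast
  then show False
    using ev[of "\<rho> + 1"] by (auto simp: eventually_sequentially)
qed

end

section \<open>Polynomials and towers\<close>

lemma cong_preserving_poly: "cong_preserving (poly f)"
  for f :: "int poly"
proof
  fix x y m :: int
  assume "[x = y] (mod m)"
  then show "[poly f x = poly f y] (mod m)"
    by (induction f) (simp_all add: cong_add cong_mult)
qed

lemma red_map_eq: "red_map f p = (\<lambda>z. poly f z mod int p)"
  by (simp add: red_map_def fun_eq_iff)

lemma poly_eventually_ge_1:
  fixes g :: "int poly"
  assumes "0 < lead_coeff g"
  shows "\<exists>B. \<forall>x\<ge>B. 1 \<le> poly g x"
  using assms
proof (induction g)
  case (pCons c h)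
  show ?case
  proof (cases "h = 0")
    case True
    then show ?thesis
      using pCons.prems by auto
  next
    case False
    then obtain B where B: "\<And>x. B \<le> x \<Longrightarrow> 1 \<le> poly h x"
      using pCons by auto
    have "1 \<le> poly (pCons c h) x" if "max B (max 0 (1 - c)) \<le> x" for x
    proof -
      have "x * 1 \<le> x * poly h x"
        using that B[of x] by (intro mult_left_mono) auto
      then show ?thesis
        using that by simp
    qed
    then show ?thesis
      by blast
  qed
qed simp

lemma poly_eventually_gt_id:
  fixes f :: "int poly"
  assumes pos: "\<And>n::nat. 1 \<le> n \<Longrightarrow> 1 \<le> poly f (int n)"
    and "0 < degree f" "f \<noteq> [:0, 1:]"
  shows "\<exists>B. \<forall>x\<ge>B. x < poly f x"
proof -
  have "0 < lead_coeff f"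
  proof (rule ccontr)
    assume "\<not> 0 < lead_coeff f"
    moreover have "lead_coeff f \<noteq> 0"
      using \<open>0 < degree f\<close> by auto
    ultimately have "lead_coeff f < 0"
      by linarith
    then have "0 < lead_coeff (- f)"
      by (simp add: lead_coeff_minus)
    then obtain B where "\<And>x. B \<le> x \<Longrightarrow> 1 \<le> poly (- f) x"
      using poly_eventually_ge_1 by blast
    moreover define n where "n = nat (max B 1)"
    then have "B \<le> int n" "1 \<le> n"
      by linarith+
    ultimately have "1 \<le> poly (- f) (int n)" "1 \<le> poly f (int n)"
      using pos by auto
    then show False
      by simp
  qed
  define g where "g = f - [:0, 1:]"
  have "0 < lead_coeff g"
  proof (cases "degree f = 1")
    case True
    then obtain c d where f: "f = [:d, c:]" "c \<noteq> 0"
      by (rule degree1_coeffs)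
    show ?thesis
    proof (cases "c = 1")
      case True
      then have "d \<noteq> 0" "0 \<le> d"
        using \<open>f \<noteq> [:0, 1:]\<close> pos[of 1] f by auto
      then show ?thesis
        using True f by (simp add: g_def)
    next
      case False
      then show ?thesis
        using f \<open>0 < lead_coeff f\<close> by (simp add: g_def)
    qed
  next
    case False
    then have "degree (- [:0, 1::int:]) < degree f"
      using \<open>0 < degree f\<close> by simp
    then have "lead_coeff (- [:0, 1:] + f) = lead_coeff f"
      by (rule lead_coeff_add_le)
    moreover have "g = - [:0, 1:] + f"
      by (simp add: g_def)
    ultimately show ?thesis
      using \<open>0 < lead_coeff f\<close> by (simp only:)
  qed
  then obtain B where B: "\<And>x. B \<le> x \<Longrightarrow> 1 \<le> poly g x"
    using poly_eventually_ge_1 by blast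
  have "x < poly f x" if "B \<le> x" for x
    using B[OF that] by (simp add: g_def)
  then show ?thesis
    by blast
qed

lemma is_full_cycle_red_map_nontrivial:
  fixes f :: "int poly" and p :: nat
  assumes full: "is_full_cycle (red_map f p) {0..<int p}" and "2 \<le> p"
  shows "0 < degree f" "f \<noteq> [:0, 1:]"
proof -
  have "inj_on (red_map f p) {0..<int p}"
    using full by (simp add: is_full_cycle_def bij_betw_def)
  then have "red_map f p 0 \<noteq> red_map f p 1"
    using \<open>2 \<le> p\<close> by (auto dest: inj_onD)
  then show "0 < degree f"
  proof (rule contrapos_np)
    assume "\<not> 0 < degree f"
    then obtain c where "f = [:c:]"
      using degree0_coeffs by blast
    then show "red_map f p 0 = red_map f p 1"
      by (simp add: red_map_def)
  qed
  have "(red_map f p ^^ 1) 0 \<noteq> (red_map f p ^^ 0) 0"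
    using is_full_cycle_funpow_eq_iff[OF full, of 0 1 0] \<open>2 \<le> p\<close> by (simp add: cong_def)
  then show "f \<noteq> [:0, 1:]"
    by (auto simp: red_map_def)
qed

context
  fixes f :: "int poly"
  assumes pos: "\<And>n::nat. 1 \<le> n \<Longrightarrow> 1 \<le> poly f (int n)"
begin

lemma up1_ge_1: "1 \<le> a \<Longrightarrow> 1 \<le> up1 f a m"
proof (induction m)
  case (Suc m)
  then show ?case
    using pos[of "up1 f a m"] by (simp add: up1_def fN_def)
qed (simp add: up1_def)

lemma int_up1: "1 \<le> a \<Longrightarrow> int (up1 f a m) = (poly f ^^ m) (int a)"
proof (induction m)
  case (Suc m)
  have "int (up1 f a (Suc m)) = poly f (int (up1 f a m))"
    using pos[OF up1_ge_1[OF Suc.prems, of m]] by (simp add: up1_def fN_def)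
  then show ?case
    using Suc by simp
qed (simp add: up1_def)

lemma int_up2_Suc: "1 \<le> a \<Longrightarrow> int (up2 f a b (Suc n)) = (poly f ^^ up2 f a b n) (int a)"
  using int_up1 by (simp add: up2_def)

lemma up2_tendsto_at_top:
  assumes "1 \<le> a" and grows: "\<And>z. int a \<le> z \<Longrightarrow> z < poly f z"
  shows "filterlim (\<lambda>n. real (up2 f a b n)) at_top sequentially"
proof -
  have orbit_ge: "int a + int m \<le> (poly f ^^ m) (int a)" for m
  proof (induction m)
    case (Suc m)
    then show ?case
      using grows[of "(poly f ^^ m) (int a)"] by simp
  qed simp
  have "n \<le> up2 f a b n" for n
  proof (induction n)
    case (Suc n)
    then show ?case
      using orbit_ge[of "up2 f a b n"] int_up2_Suc[OF \<open>1 \<le> a\<close>, of b n] \<open>1 \<le> a\<close> by linarith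
  qed simp
  then show ?thesis
    by (intro filterlim_at_top_mono[OF filterlim_real_sequentially]) auto
qed

end

lemma padic_tendsto_if_eventually_cong:
  fixes p :: nat and y r :: "nat \<Rightarrow> int"
  assumes "0 < p" and ev: "\<And>k. \<forall>\<^sub>F n in sequentially. [y n = r k] (mod int p ^ k)"
  shows "padic_tendsto p y (\<lambda>k. r k mod int p ^ k)"
  unfolding padic_tendsto_def padic_ints_def
proof (intro conjI allI CollectI)
  fix k
  show "0 \<le> r k mod int p ^ k" "r k mod int p ^ k < int p ^ k"
    using \<open>0 < p\<close> by simp_all
  obtain n where n: "[y n = r (Suc k)] (mod int p ^ Suc k)" "[y n = r k] (mod int p ^ k)"
    using eventually_happens'[OF sequentially_bot eventually_conj[OF ev ev]] by blast
  have "[y n = r (Suc k)] (mod int p ^ k)"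
    using n(1) by (rule cong_dvd_modulus) simp
  then have "[r (Suc k) = r k] (mod int p ^ k)"
    using n(2) by (rule cong_trans[OF cong_sym])
  then show "r (Suc k) mod int p ^ Suc k mod int p ^ k = r k mod int p ^ k"
    by (simp add: cong_def mod_mod_cancel)
  show "\<exists>N. \<forall>n\<ge>N. [y n = r k mod int p ^ k] (mod int p ^ k)"
    using ev[of k] by (simp add: eventually_sequentially cong_def)
qed

lemma padic_limit_exists:
  fixes f :: "int poly" and a p :: nat
  assumes pos: "\<And>n::nat. 1 \<le> n \<Longrightarrow> 1 \<le> poly f (int n)"
    and no_cycle: "\<forall>q. prime q \<longrightarrow> \<not> is_full_cycle (red_map f q) {0..<int q}"
    and "1 \<le> a" "0 < p"
  shows "\<exists>L. \<forall>b. filterlim (\<lambda>n. real (up2 f a b n)) at_top sequentially \<longrightarrow>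
           padic_tendsto p (\<lambda>n. int (up2 f a b n)) L"
proof -
  interpret cong_preserving "poly f"
    by (rule cong_preserving_poly)
  have no_cycle': "\<And>q. prime q \<Longrightarrow> \<not> is_full_cycle (\<lambda>z. poly f z mod int q) {0..<int q}"
    using no_cycle by (simp add: red_map_eq)
  have "\<exists>r. \<forall>y. escaping_tower (int a) y \<longrightarrow>
          (\<forall>\<^sub>F n in sequentially. [int (y n) = r] (mod int p ^ k))" for k
    using eventually_cong_const[OF no_cycle', of "p ^ k" "int a"] \<open>0 < p\<close> by simp
  then have "\<forall>k. \<exists>r. \<forall>y. escaping_tower (int a) y \<longrightarrow>
          (\<forall>\<^sub>F n in sequentially. [int (y n) = r] (mod int p ^ k))"
    by blast
  from choice[OF this] obtain r where r: "\<forall>k. \<forall>y. escaping_tower (int a) y \<longrightarrow>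
          (\<forall>\<^sub>F n in sequentially. [int (y n) = r k] (mod int p ^ k))"
    by blast
  have "padic_tendsto p (\<lambda>n. int (up2 f a b n)) (\<lambda>k. r k mod int p ^ k)"
    if "filterlim (\<lambda>n. real (up2 f a b n)) at_top sequentially" for b
  proof (rule padic_tendsto_if_eventually_cong[OF \<open>0 < p\<close>])
    have "escaping_tower (int a) (up2 f a b)"
      using that int_up2_Suc[OF pos \<open>1 \<le> a\<close>] by (simp add: escaping_tower_def)
    then show "\<forall>\<^sub>F n in sequentially. [int (up2 f a b n) = r k] (mod int p ^ k)" for k
      using r by blast
  qed
  then show ?thesis
    by blast
qed

lemma no_common_padic_limit:
  fixes f :: "int poly" and p :: nat
  assumes pos: "\<And>n::nat. 1 \<le> n \<Longrightarrow> 1 \<le> poly f (int n)"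
    and "prime p" and full: "is_full_cycle (red_map f p) {0..<int p}"
  shows "\<exists>a\<ge>1. \<forall>L. \<exists>b\<ge>1. filterlim (\<lambda>n. real (up2 f a b n)) at_top sequentially \<and>
           \<not> padic_tendsto p (\<lambda>n. int (up2 f a b n)) L"
proof -
  interpret cong_preserving "poly f"
    by (rule cong_preserving_poly)
  have "2 \<le> p"
    using \<open>prime p\<close> by (rule prime_ge_2_nat)
  obtain B where B: "\<And>x. B \<le> x \<Longrightarrow> x < poly f x"
    using poly_eventually_gt_id[OF pos is_full_cycle_red_map_nontrivial[OF full \<open>2 \<le> p\<close>]] by blast
  define a where "a = nat (max B 1)"
  then have "1 \<le> a" "B \<le> int a"
    by linarith+
  then have unbounded: "filterlim (\<lambda>n. real (up2 f a b n)) at_top sequentially" for b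
    using up2_tendsto_at_top[OF pos] B by simp
  have "\<exists>b\<ge>1. \<not> padic_tendsto p (\<lambda>n. int (up2 f a b n)) L" for L
  proof -
    obtain b where "1 \<le> b" "\<not> (\<forall>\<^sub>F n in sequentially. [int (up2 f a b n) = L 1] (mod int p))"
      using not_eventually_cong_const[OF full[unfolded red_map_eq] \<open>2 \<le> p\<close>,
          where Y = "up2 f a" and x = "int a" and r = "L 1"]
        int_up2_Suc[OF pos \<open>1 \<le> a\<close>] by (auto simp: up2_def)
    moreover have "\<forall>\<^sub>F n in sequentially. [int (up2 f a b n) = L 1] (mod int p)"
      if "padic_tendsto p (\<lambda>n. int (up2 f a b n)) L"
    proof -
      have "\<exists>N. \<forall>n\<ge>N. [int (up2 f a b n) = L 1] (mod int p ^ 1)"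
        using that unfolding padic_tendsto_def by blast
      then show ?thesis
        by (simp add: eventually_sequentially)
    qed
    ultimately show ?thesis
      by blast
  qed
  then show ?thesis
    using \<open>1 \<le> a\<close> unbounded by blast
qed

theorem theorem1p3:
  fixes f :: "int poly"
  assumes fN_pos: "\<And>n::nat. n \<ge> 1 \<Longrightarrow> poly f (int n) \<ge> 1"
  shows "(\<forall>p::nat. prime p \<longrightarrow> \<not> is_full_cycle (red_map f p) {0..<int p})
     \<longleftrightarrow>
     (\<forall>a::nat. a \<ge> 1 \<longrightarrow> (\<forall>p::nat. prime p \<longrightarrow>
        (\<exists>L. \<forall>b::nat. b \<ge> 1 \<longrightarrow>
           filterlim (\<lambda>n. real (up2 f a b n)) at_top sequentially \<longrightarrow>
           padic_tendsto p (\<lambda>n. int (up2 f a b n)) L)))"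
  using padic_limit_exists[OF fN_pos] no_common_padic_limit[OF fN_pos] prime_gt_0_nat by meson

end
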